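(* Let $\Omega$, $\mathcal K$ be as in the context, let $\mathcal B$ be a basis of the chain complex of $\mathcal K$, let $k\in\{0,1,2\}$, and let $\mathcal M_k=\{(\sigma_1,\tau_1),\dots,(\sigma_n,\tau_n)\}$ be an acyclic matching of $k$-chains on $\mathcal B$, ordered so that $\sigma_i$ is not incident to any of $\tau_{i+1},\dots,\tau_n$. Let $\mathcal B'=\mathcal B\cdot\mathcal M_k$ and let $\mathcal D_k=\{\sigma_1,\dots,\sigma_n\}$, $\mathcal U_{k+1}=\{\tau_1,\dots,\tau_n\}$, $\mathcal C_k=\mathcal B'_k\setminus\mathcal D_k$, $\mathcal C_{k+1}=\mathcal B'_{k+1}\setminus\mathcal U_{k+1}$. Then the matrix $\mathbf D_k$ with respect to the basis $\mathcal B'$ has the block form $$\mathbf D_k=\begin{pmatrix}\mathbf D_k[\mathcal U_{k+1}\times\mathcal D_k] & \mathbf D_k[\mathcal U_{k+1}\times\mathcal C_k]\\ 0 & \mathbf D_k[\mathcal C_{k+1}\times\mathcal C_k]\end{pmatrix},$$ where $\mathbf D_k[\mathcal U_{k+1}\times\mathcal D_k]$ is upper triangular and invertible.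
   Context: $\Omega\subset\mathbb R^3$ is a closed bounded polyhedral domain with Lipschitz boundary, homeomorphic to a closed 3-ball; $\mathcal K$ is a polyhedral cell complex (regular cell complex with polyhedral cells) subdividing $\Omega$ with oriented cells. $C_k$ is the real vector space of $k$-chains with canonical basis the $k$-cells; $\partial_{k+1}:C_{k+1}\to C_k$ is the boundary operator (on a cell $\tau$, $\partial\tau=\sum_\rho w_\rho\rho$ with $w_\rho=\pm1$ according to induced orientation if $\rho\subset\partial\tau$, else $0$); $\langle\cdot,\cdot\rangle$ is the scalar product making the canonical basis orthonormal. A basis $\mathcal B=\bigcup_k\mathcal B_k$ consists of bases of each $C_k$. For $\sigma\in\mathcal B_k$, $\tau\in\mathcal B_{k+1}$, $\sigma\prec\tau$ (incident) iff $\langle\sigma,\partial_{k+1}\tau\rangle\ne0$. With respect to a basis $\mathcal B$, $\mathbf D_k$ is the matrix with rows indexed by $\mathcal B_{k+1}$, columns by $\mathcal B_k$, entry $(\tau,\sigma)=\langle\sigma,\partial_{k+1}\tau\rangle$; for a partition of indices, $\mathbf A[I\times J]$ denotes the submatrix with rows in $I$, columns in $J$. A matching of $k$-chains on $\mathcal B$ is a set of pairs $(\sigma,\tau)$, $\sigma\in\mathcal B_k$, $\tau\in\mathcal B_{k+1}$, $\sigma\prec\tau$, each basis element in at most one pair; it is acyclic if there is no cycle $\tau_1\succ\sigma_1\prec\tau_2\succ\cdots\prec\tau_h\succ\sigma_h\prec\tau_1$ with $h\ge2$, $(\sigma_i,\tau_i)$ in the matching, $\tau_i$ distinct (such a matching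 admits an ordering as in the claim). Change of basis $\mathcal B\cdot\mathcal M_k$: set $\mathcal B^{(0)}=\mathcal B$; for $i=1,\dots,n$, $\mathcal B^{(i)}$ is obtained from $\mathcal B^{(i-1)}$ by leaving all elements unchanged except each element $\tau'\in\mathcal B^{(i-1)}_{k+1}$ not among $\tau_1,\dots,\tau_n$, which is replaced by $\tau'-\frac{\langle\sigma_i,\partial_{k+1}\tau'\rangle}{\langle\sigma_i,\partial_{k+1}\tau_i\rangle}\tau_i$; then $\mathcal B\cdot\mathcal M_k:=\mathcal B^{(n)}$ (again a basis, containing all $\sigma_i,\tau_i$). *)

theory Defs
  imports Main "Jordan_Normal_Form.Matrix"
begin

text \<open>Abstract cellular chain complex: cell k is the (finite) set of oriented k-cells,
  w (Suc k) tau rho is the incidence number (in {-1,0,1}) of the k-cell rho in the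
  boundary of the (k+1)-cell tau.\<close>

type_synonym 'c chain = "'c \<Rightarrow> real"

definition chains :: "'c set \<Rightarrow> 'c chain set" where
  "chains K = {c. \<forall>x. x \<notin> K \<longrightarrow> c x = 0}"

definition ip :: "'c set \<Rightarrow> 'c chain \<Rightarrow> 'c chain \<Rightarrow> real" where
  "ip K a b = (\<Sum>x\<in>K. a x * b x)"

definition bnd :: "(nat \<Rightarrow> 'c set) \<Rightarrow> (nat \<Rightarrow> 'c \<Rightarrow> 'c \<Rightarrow> real) \<Rightarrow> nat \<Rightarrow> 'c chain \<Rightarrow> 'c chain" where
  "bnd cell w k c = (\<lambda>\<rho>. if \<rho> \<in> cell k then (\<Sum>\<tau>\<in>cell (Suc k). c \<tau> * w (Suc k) \<tau> \<rho>) else 0)"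

text \<open>coef sigma tau = <sigma, d_{k+1} tau>, the (tau,sigma) entry of the matrix D_k\<close>
definition coef :: "(nat \<Rightarrow> 'c set) \<Rightarrow> (nat \<Rightarrow> 'c \<Rightarrow> 'c \<Rightarrow> real) \<Rightarrow> nat \<Rightarrow> 'c chain \<Rightarrow> 'c chain \<Rightarrow> real" where
  "coef cell w k \<sigma> \<tau> = ip (cell k) \<sigma> (bnd cell w k \<tau>)"

definition incident :: "(nat \<Rightarrow> 'c set) \<Rightarrow> (nat \<Rightarrow> 'c \<Rightarrow> 'c \<Rightarrow> real) \<Rightarrow> nat \<Rightarrow> 'c chain \<Rightarrow> 'c chain \<Rightarrow> bool" where
  "incident cell w k \<sigma> \<tau> \<longleftrightarrow> coef cell w k \<sigma> \<tau> \<noteq> 0"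

definition cell_complex :: "(nat \<Rightarrow> 'c set) \<Rightarrow> (nat \<Rightarrow> 'c \<Rightarrow> 'c \<Rightarrow> real) \<Rightarrow> bool" where
  "cell_complex cell w \<longleftrightarrow> (\<forall>k. finite (cell k)) \<and> (\<forall>k \<tau> \<rho>. w k \<tau> \<rho> \<in> {-1, 0, 1})"

definition is_basis :: "'c set \<Rightarrow> 'c chain set \<Rightarrow> bool" where
  "is_basis K B \<longleftrightarrow> finite B \<and> B \<subseteq> chains K
     \<and> (\<forall>a. (\<lambda>x. \<Sum>b\<in>B. a b * b x) = (\<lambda>x. 0) \<longrightarrow> (\<forall>b\<in>B. a b = 0))
     \<and> (\<forall>c\<in>chains K. \<exists>a. c = (\<lambda>x. \<Sum>b\<in>B. a b * b x))"

definition is_complex_basis :: "(nat \<Rightarrow> 'c set) \<Rightarrow> (nat \<Rightarrow> 'c chain set) \<Rightarrow> bool" where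
  "is_complex_basis cell B \<longleftrightarrow> (\<forall>k. is_basis (cell k) (B k))"

definition is_matching :: "(nat \<Rightarrow> 'c set) \<Rightarrow> (nat \<Rightarrow> 'c \<Rightarrow> 'c \<Rightarrow> real) \<Rightarrow> nat
     \<Rightarrow> (nat \<Rightarrow> 'c chain set) \<Rightarrow> ('c chain \<times> 'c chain) list \<Rightarrow> bool" where
  "is_matching cell w k B M \<longleftrightarrow> distinct (map fst M) \<and> distinct (map snd M)
     \<and> (\<forall>(\<sigma>,\<tau>)\<in>set M. \<sigma> \<in> B k \<and> \<tau> \<in> B (Suc k) \<and> incident cell w k \<sigma> \<tau>)"

text \<open>no cycle tau_1 > sigma_1 < tau_2 > ... < tau_h > sigma_h < tau_1, h >= 2, tau_i distinct\<close>
definition acyclic_matching :: "(nat \<Rightarrow> 'c set) \<Rightarrow> (nat \<Rightarrow> 'c \<Rightarrow> 'c \<Rightarrow> real) \<Rightarrow> nat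
     \<Rightarrow> (nat \<Rightarrow> 'c chain set) \<Rightarrow> ('c chain \<times> 'c chain) list \<Rightarrow> bool" where
  "acyclic_matching cell w k B M \<longleftrightarrow> is_matching cell w k B M \<and>
     \<not> (\<exists>h p. h \<ge> 2 \<and> (\<forall>i<h. p i \<in> set M) \<and> inj_on (\<lambda>i. snd (p i)) {..<h}
            \<and> (\<forall>i<h. incident cell w k (fst (p i)) (snd (p (Suc i mod h)))))"

text \<open>one step of the change of basis B . M_k, using the pair (sigma_i, tau_i); Us = {tau_1..tau_n}\<close>
definition cob_step :: "(nat \<Rightarrow> 'c set) \<Rightarrow> (nat \<Rightarrow> 'c \<Rightarrow> 'c \<Rightarrow> real) \<Rightarrow> nat \<Rightarrow> 'c chain set
     \<Rightarrow> (nat \<Rightarrow> 'c chain set) \<Rightarrow> 'c chain \<times> 'c chain \<Rightarrow> (nat \<Rightarrow> 'c chain set)" where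
  "cob_step cell w k Us B p = B (Suc k := (\<lambda>t. if t \<in> Us then t else
       (\<lambda>x. t x - coef cell w k (fst p) t / coef cell w k (fst p) (snd p) * snd p x)) ` B (Suc k))"

definition change_basis :: "(nat \<Rightarrow> 'c set) \<Rightarrow> (nat \<Rightarrow> 'c \<Rightarrow> 'c \<Rightarrow> real) \<Rightarrow> nat
     \<Rightarrow> (nat \<Rightarrow> 'c chain set) \<Rightarrow> ('c chain \<times> 'c chain) list \<Rightarrow> (nat \<Rightarrow> 'c chain set)" where
  "change_basis cell w k B M = foldl (cob_step cell w k (set (map snd M))) B M"

end

theory Submission
  imports Defs "Jordan_Normal_Form.Determinant"
begin

text \<open>Each step of the change of basis \<open>\<B> \<cdot> \<M>\<^sub>k\<close> is one column operation of Gaussian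
  elimination: replacing every unmatched \<open>\<tau>'\<close> by \<open>\<tau>' - (\<langle>\<sigma>\<^sub>i, \<partial>\<tau>'\<rangle> / \<langle>\<sigma>\<^sub>i, \<partial>\<tau>\<^sub>i\<rangle>) \<tau>\<^sub>i\<close>
  clears its \<open>\<sigma>\<^sub>i\<close>-coefficient. Because \<open>\<sigma>\<^sub>j\<close> (\<open>j < i\<close>) is not incident to \<open>\<tau>\<^sub>i\<close>, the
  \<open>i\<close>-th step does not disturb the coefficients cleared before, so in the end the block
  \<open>\<C>\<^sub>k\<^sub>+\<^sub>1 \<times> \<D>\<^sub>k\<close> vanishes. The same ordering makes \<open>\<U>\<^sub>k\<^sub>+\<^sub>1 \<times> \<D>\<^sub>k\<close> upper triangular, and its
  diagonal entries \<open>\<langle>\<sigma>\<^sub>i, \<partial>\<tau>\<^sub>i\<rangle>\<close> are nonzero since matched pairs are incident. Acyclicity of the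
  matching is used only through this ordering.\<close>

lemma invertible_mat_if_det_nonzero:
  fixes A :: "'a :: field mat"
  assumes A: "A \<in> carrier_mat n n" and "det A \<noteq> 0"
  shows "invertible_mat A"
proof -
  from det_non_zero_imp_unit[OF assms, unfolded Units_def, of "()"]
  obtain B where "B \<in> carrier_mat n n" "B * A = 1\<^sub>m n" "A * B = 1\<^sub>m n"
    by (auto simp: ring_mat_def)
  with A show ?thesis
    unfolding invertible_mat_def inverts_mat_def by auto
qed

lemma upper_triangular_invertible_mat:
  fixes A :: "'a :: field mat"
  assumes A: "A \<in> carrier_mat n n" and ut: "upper_triangular A"
    and diag: "\<And>i. i < n \<Longrightarrow> A $$ (i, i) \<noteq> 0"
  shows "invertible_mat A"
proof (rule invertible_mat_if_det_nonzero[OF A])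
  have "0 \<notin> set (diag_mat A)"
    using A diag by (auto simp: diag_mat_def)
  then show "det A \<noteq> 0"
    using upper_triangular_imp_det_eq_0_iff[OF A ut] by simp
qed

lemma coef_diff_scaled:
  "coef cell w k \<sigma> (\<lambda>x. t x - c * u x) = coef cell w k \<sigma> t - c * coef cell w k \<sigma> u"
  unfolding coef_def ip_def bnd_def
  by (simp add: algebra_simps sum_subtractf sum_distrib_left sum_distrib_right)

lemma cob_step_other_level:
  "j \<noteq> Suc k \<Longrightarrow> cob_step cell w k Us B p j = B j"
  by (simp add: cob_step_def)

lemma cob_step_keeps_matched:
  "Us \<subseteq> B (Suc k) \<Longrightarrow> Us \<subseteq> cob_step cell w k Us B p (Suc k)"
  by (force simp: cob_step_def)

lemma cob_step_unmatchedE: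
  assumes "\<tau> \<in> cob_step cell w k Us B (\<sigma>, \<upsilon>) (Suc k) - Us"
  obtains t where "t \<in> B (Suc k) - Us"
    and "\<tau> = (\<lambda>x. t x - coef cell w k \<sigma> t / coef cell w k \<sigma> \<upsilon> * \<upsilon> x)"
  using assms by (auto simp: cob_step_def split: if_splits)

lemma cob_step_clears_coef:
  assumes "coef cell w k \<sigma> \<upsilon> \<noteq> 0"
    and "\<tau> \<in> cob_step cell w k Us B (\<sigma>, \<upsilon>) (Suc k) - Us"
  shows "coef cell w k \<sigma> \<tau> = 0"
proof -
  obtain t where "\<tau> = (\<lambda>x. t x - coef cell w k \<sigma> t / coef cell w k \<sigma> \<upsilon> * \<upsilon> x)"
    using assms(2) by (rule cob_step_unmatchedE)
  then have "coef cell w k \<sigma> \<tau>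
      = coef cell w k \<sigma> t - coef cell w k \<sigma> t / coef cell w k \<sigma> \<upsilon> * coef cell w k \<sigma> \<upsilon>"
    by (simp only: coef_diff_scaled)
  with assms(1) show ?thesis by simp
qed

lemma cob_step_keeps_zero_coef:
  assumes "\<forall>t \<in> B (Suc k) - Us. coef cell w k \<rho> t = 0" and "coef cell w k \<rho> \<upsilon> = 0"
    and "\<tau> \<in> cob_step cell w k Us B (\<sigma>, \<upsilon>) (Suc k) - Us"
  shows "coef cell w k \<rho> \<tau> = 0"
proof -
  obtain t where "t \<in> B (Suc k) - Us"
    and "\<tau> = (\<lambda>x. t x - coef cell w k \<sigma> t / coef cell w k \<sigma> \<upsilon> * \<upsilon> x)"
    using assms(3) by (rule cob_step_unmatchedE)
  then have "coef cell w k \<rho> \<tau>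
      = coef cell w k \<rho> t - coef cell w k \<sigma> t / coef cell w k \<sigma> \<upsilon> * coef cell w k \<rho> \<upsilon>"
    by (simp only: coef_diff_scaled)
  with assms(1,2) \<open>t \<in> B (Suc k) - Us\<close> show ?thesis by simp
qed

lemma foldl_cob_step_other_level:
  "j \<noteq> Suc k \<Longrightarrow> foldl (cob_step cell w k Us) B N j = B j"
  by (induction N arbitrary: B) (simp_all add: cob_step_other_level)

lemma foldl_cob_step_keeps_matched:
  "Us \<subseteq> B (Suc k) \<Longrightarrow> Us \<subseteq> foldl (cob_step cell w k Us) B N (Suc k)"
  by (induction N arbitrary: B) (simp_all add: cob_step_keeps_matched)

lemma foldl_cob_step_clears_coefs:
  assumes "\<forall>(\<sigma>, \<upsilon>) \<in> set N. coef cell w k \<sigma> \<upsilon> \<noteq> 0"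
    and "sorted_wrt (\<lambda>p q. coef cell w k (fst p) (snd q) = 0) N"
    and "\<tau> \<in> foldl (cob_step cell w k Us) B N (Suc k) - Us" and "\<sigma> \<in> fst ` set N"
  shows "coef cell w k \<sigma> \<tau> = 0"
  using assms
proof (induction N arbitrary: \<tau> \<sigma> rule: rev_induct)
  case Nil
  then show ?case by simp
next
  case (snoc p N)
  obtain \<sigma>' \<upsilon> where p: "p = (\<sigma>', \<upsilon>)" by fastforce
  let ?B = "foldl (cob_step cell w k Us) B N"
  have \<tau>: "\<tau> \<in> cob_step cell w k Us ?B (\<sigma>', \<upsilon>) (Suc k) - Us"
    using snoc.prems(3) p by simp
  show ?case
  proof (cases "\<sigma> = \<sigma>'")
    case True
    show ?thesis
      unfolding True by (rule cob_step_clears_coef[OF _ \<tau>]) (use snoc.prems(1) p in simp)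
  next
    case False
    then have \<sigma>: "\<sigma> \<in> fst ` set N"
      using snoc.prems(4) p by auto
    have prems_N: "\<forall>(\<sigma>, \<upsilon>) \<in> set N. coef cell w k \<sigma> \<upsilon> \<noteq> 0"
        "sorted_wrt (\<lambda>p q. coef cell w k (fst p) (snd q) = 0) N"
      using snoc.prems(1,2) by (simp_all add: sorted_wrt_append)
    have "\<forall>t \<in> ?B (Suc k) - Us. coef cell w k \<sigma> t = 0"
      using snoc.IH[OF prems_N _ \<sigma>] by blast
    moreover have "coef cell w k \<sigma> \<upsilon> = 0"
      using snoc.prems(2) \<sigma> p by (auto simp: sorted_wrt_append)
    ultimately show ?thesis
      using \<tau> by (rule cob_step_keeps_zero_coef)
  qed
qed

definition matched_block :: "(nat \<Rightarrow> 'c set) \<Rightarrow> (nat \<Rightarrow> 'c \<Rightarrow> 'c \<Rightarrow> real) \<Rightarrow> nat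
    \<Rightarrow> ('c chain \<times> 'c chain) list \<Rightarrow> real mat" where
  "matched_block cell w k M =
     mat (length M) (length M) (\<lambda>(i, j). coef cell w k (fst (M ! j)) (snd (M ! i)))"

lemma matched_block_upper_triangular:
  assumes "sorted_wrt (\<lambda>p q. coef cell w k (fst p) (snd q) = 0) M"
  shows "upper_triangular (matched_block cell w k M)"
  using assms unfolding matched_block_def upper_triangular_def sorted_wrt_iff_nth_less by auto

lemma matched_block_invertible:
  assumes "\<forall>(\<sigma>, \<upsilon>) \<in> set M. coef cell w k \<sigma> \<upsilon> \<noteq> 0"
    and "sorted_wrt (\<lambda>p q. coef cell w k (fst p) (snd q) = 0) M"
  shows "invertible_mat (matched_block cell w k M)"
proof (rule upper_triangular_invertible_mat)
  show "matched_block cell w k M \<in> carrier_mat (length M) (length M)"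
    unfolding matched_block_def by (rule mat_carrier)
  show "upper_triangular (matched_block cell w k M)"
    using assms(2) by (rule matched_block_upper_triangular)
  show "matched_block cell w k M $$ (i, i) \<noteq> 0" if "i < length M" for i
    using assms(1) nth_mem[OF that] by (auto simp: matched_block_def that)
qed

theorem theorem7:
  fixes cell :: "nat \<Rightarrow> 'c set" and w :: "nat \<Rightarrow> 'c \<Rightarrow> 'c \<Rightarrow> real"
    and B :: "nat \<Rightarrow> 'c chain set" and k :: nat and M :: "('c chain \<times> 'c chain) list"
  assumes "cell_complex cell w"
    and "is_complex_basis cell B"
    and "k \<le> 2"
    and "acyclic_matching cell w k B M"
    and "\<forall>i j. i < j \<and> j < length M \<longrightarrow> \<not> incident cell w k (fst (M ! i)) (snd (M ! j))"
  shows "let B' = change_basis cell w k B M; n = length M;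
             D = set (map fst M); U = set (map snd M);
             C = B' k - D; C1 = B' (Suc k) - U;
             A = mat n n (\<lambda>(i, j). coef cell w k (fst (M ! j)) (snd (M ! i)))
         in D \<subseteq> B' k \<and> U \<subseteq> B' (Suc k)
            \<and> (\<forall>\<tau>\<in>C1. \<forall>\<sigma>\<in>D. coef cell w k \<sigma> \<tau> = 0)
            \<and> upper_triangular A \<and> invertible_mat A"
proof -
  let ?B' = "change_basis cell w k B M" and ?D = "set (map fst M)" and ?U = "set (map snd M)"
  have matching: "is_matching cell w k B M"
    using assms(4) unfolding acyclic_matching_def by (rule conjunct1)
  have pairs: "\<sigma> \<in> B k" "\<upsilon> \<in> B (Suc k)" "coef cell w k \<sigma> \<upsilon> \<noteq> 0" if "(\<sigma>, \<upsilon>) \<in> set M" for \<sigma> \<upsilon>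
    using matching that unfolding is_matching_def incident_def by auto
  have nonzero: "\<forall>(\<sigma>, \<upsilon>) \<in> set M. coef cell w k \<sigma> \<upsilon> \<noteq> 0"
    using pairs(3) by auto
  have ordered: "sorted_wrt (\<lambda>p q. coef cell w k (fst p) (snd q) = 0) M"
    using assms(5) unfolding sorted_wrt_iff_nth_less incident_def by auto
  have "?B' k = B k"
    unfolding change_basis_def by (simp add: foldl_cob_step_other_level)
  then have D: "?D \<subseteq> ?B' k"
    using pairs(1) by auto
  have U: "?U \<subseteq> ?B' (Suc k)"
    unfolding change_basis_def by (rule foldl_cob_step_keeps_matched) (use pairs(2) in auto)
  have zero_block: "\<forall>\<tau> \<in> ?B' (Suc k) - ?U. \<forall>\<sigma> \<in> ?D. coef cell w k \<sigma> \<tau> = 0"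
    unfolding change_basis_def using foldl_cob_step_clears_coefs[OF nonzero ordered] by simp
  show ?thesis
    unfolding Let_def matched_block_def[symmetric]
    using D U zero_block matched_block_upper_triangular[OF ordered]
      matched_block_invertible[OF nonzero ordered]
    by (intro conjI) assumption+
qed

end
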